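(* Let $r\ge 1$ and $K\ge1$ be integers, $\beta_1,\beta_2>0$ and $\theta_1,\theta_2>0$. Let $\zeta=(1,0,0)$, $\eta=(0,0,1)$, $v=(0,0,1)$, $v'=(0,1,0)$, and for $i=1,\dots,r$ let $k_i=2^{i-1}K\zeta\in\mathbb{Z}^3$ and $k_i'=k_i+\eta$. Define the vector fields on $\mathbb{R}^3$ \[ u_0(x)=r^{-\beta_1}\sum_{i=1}^r|k_i|^{\theta_1}v\cos(k_i\cdot x),\qquad b_0(x)=r^{-\beta_2}\sum_{i=1}^r|k_i'|^{\theta_2}v'\cos(k_i'\cdot x). \] Then \[ \|u_0\|_{\dot B^{-\theta_1}_{\infty,\infty}}\lesssim r^{-\beta_1},\qquad \|b_0\|_{\dot B^{-\theta_2}_{\infty,\infty}}\lesssim r^{-\beta_2}, \] with implicit constants independent of $r$ and $K$.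
   Context: For $s>0$, $\|f\|_{\dot B^{-s}_{\infty,\infty}}=\sup_{t>0}t^{\frac{s}{2\alpha}}\|e^{-t(-\Delta)^{\alpha}}f\|_{L^\infty}$ for a fixed $\alpha>0$ (different $\alpha$ give equivalent norms), where $e^{-t(-\Delta)^\alpha}$ is the fractional heat semigroup (Fourier multiplier $e^{-t|\xi|^{2\alpha}}$). *)

theory Defs
  imports "HOL-Analysis.Analysis"
begin

type_synonym vec3 = "real ^ 3"

definition trig :: "(vec3 \<times> vec3) list \<Rightarrow> vec3 \<Rightarrow> vec3" where
  "trig ps x = (\<Sum>(a, k) \<leftarrow> ps. cos (k \<bullet> x) *\<^sub>R a)"

text \<open>Fractional heat semigroup e^{-t(-Delta)^alpha}: Fourier multiplier e^{-t|xi|^{2 alpha}},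
  which acts on the mode cos(k . x) by multiplication with e^{-t|k|^{2 alpha}}.\<close>
definition frac_heat :: "real \<Rightarrow> real \<Rightarrow> (vec3 \<times> vec3) list \<Rightarrow> (vec3 \<times> vec3) list" where
  "frac_heat \<alpha> t ps = map (\<lambda>(a, k). (exp (- t * norm k powr (2 * \<alpha>)) *\<^sub>R a, k)) ps"

definition Linf_norm :: "(vec3 \<Rightarrow> vec3) \<Rightarrow> ereal" where
  "Linf_norm f = (SUP x. ereal (norm (f x)))"

text \<open>Homogeneous Besov norm of negative order -s (s > 0), via the fractional heat semigroup
  with fixed parameter alpha > 0:
  sup_{t>0} t^{s/(2 alpha)} || e^{-t(-Delta)^alpha} f ||_{L^infty}.\<close>
definition besov_neg :: "real \<Rightarrow> real \<Rightarrow> (vec3 \<times> vec3) list \<Rightarrow> ereal" where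
  "besov_neg \<alpha> s ps =
     (SUP t \<in> {0<..}. ereal (t powr (s / (2 * \<alpha>))) * Linf_norm (trig (frac_heat \<alpha> t ps)))"

definition zeta :: vec3 where "zeta = vector [1, 0, 0]"
definition eta :: vec3 where "eta = vector [0, 0, 1]"
definition vv :: vec3 where "vv = vector [0, 0, 1]"
definition vv' :: vec3 where "vv' = vector [0, 1, 0]"

definition kk :: "nat \<Rightarrow> nat \<Rightarrow> vec3" where
  "kk K i = (2 ^ (i - 1) * real K) *\<^sub>R zeta"

definition kk' :: "nat \<Rightarrow> nat \<Rightarrow> vec3" where
  "kk' K i = kk K i + eta"

definition u0_modes :: "nat \<Rightarrow> nat \<Rightarrow> real \<Rightarrow> real \<Rightarrow> (vec3 \<times> vec3) list" where
  "u0_modes r K \<beta>1 \<theta>1 =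
     map (\<lambda>i. ((real r powr (- \<beta>1) * norm (kk K i) powr \<theta>1) *\<^sub>R vv, kk K i)) [1..<r+1]"

definition b0_modes :: "nat \<Rightarrow> nat \<Rightarrow> real \<Rightarrow> real \<Rightarrow> (vec3 \<times> vec3) list" where
  "b0_modes r K \<beta>2 \<theta>2 =
     map (\<lambda>i. ((real r powr (- \<beta>2) * norm (kk' K i) powr \<theta>2) *\<^sub>R vv', kk' K i)) [1..<r+1]"

lemma trig_u0: "trig (u0_modes r K \<beta>1 \<theta>1) y =
   (\<Sum>i=1..r. (real r powr (- \<beta>1) * norm (kk K i) powr \<theta>1 * cos (kk K i \<bullet> y)) *\<^sub>R vv)"
  unfolding trig_def u0_modes_def
  apply (simp add: o_def case_prod_unfold sum_list_distinct_conv_sum_set atLeastLessThanSuc_atLeastAtMost mult.commute)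
  by (rule sum.cong, auto)

end

theory Submission
  imports Defs
begin

text \<open>Weighted by \<open>t\<^sup>\<theta>\<^sup>/\<^sup>(\<^sup>2\<^sup>\<alpha>\<^sup>)\<close>, the heat-damped amplitude of the mode with frequency
  \<open>k\<close> is \<open>g (t\<^sup>1\<^sup>/\<^sup>(\<^sup>2\<^sup>\<alpha>\<^sup>) |k|)\<close> with \<open>g \<nu> = \<nu>\<^sup>\<theta> exp (-\<nu>\<^sup>2\<^sup>\<alpha>)\<close>. Bounding the cosines by 1
  therefore reduces the claim to a bound, uniform in \<open>m\<close> and \<open>r\<close>, on sums of \<open>g\<close> over dyadic
  sequences \<open>\<nu>\<^sub>i \<in> [m 2\<^sup>i, 2 m 2\<^sup>i]\<close>. With \<open>x\<^sub>i = (m 2\<^sup>i)\<^sup>\<theta>\<close> one has \<open>g \<nu>\<^sub>i \<lesssim> x\<^sub>i / (1 + x\<^sub>i)\<^sup>2\<close>,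
  and because \<open>x\<^sub>i\<^sub>+\<^sub>1 = 2\<^sup>\<theta> x\<^sub>i\<close> this is dominated by the increment of \<open>x / (1 + x)\<close>
  from \<open>x\<^sub>i\<close> to \<open>x\<^sub>i\<^sub>+\<^sub>1\<close>; the sum telescopes and stays below a constant.\<close>

lemma power_le_fact_mult_exp:
  fixes y :: real
  assumes "0 \<le> y"
  shows "y ^ n \<le> fact n * exp y"
proof -
  have "y ^ n /\<^sub>R fact n \<le> exp y"
    by (rule sums_le[OF _ sums_single[of n "\<lambda>n. y ^ n /\<^sub>R fact n"] exp_converges])
      (simp add: assms)
  then show ?thesis by (simp add: divide_simps mult.commute)
qed

lemma powr_le_const_mult_exp:
  fixes c :: real
  assumes "0 \<le> c"
  obtains D where "D > 0" "\<And>y. 0 \<le> y \<Longrightarrow> y powr c \<le> D * exp y"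
proof -
  define n where "n = nat \<lceil>c\<rceil>"
  have bound: "y powr c \<le> (1 + fact n) * exp y" if y: "0 \<le> y" for y :: real
  proof (cases "y \<le> 1")
    case True
    then have "y powr c \<le> 1" using y assms by (simp add: powr_le1)
    moreover have "1 * 1 \<le> (1 + fact n) * exp y" using y by (intro mult_mono) auto
    ultimately show ?thesis by simp
  next
    case False
    have "c \<le> real n" unfolding n_def by linarith
    then have "y powr c \<le> y powr real n" using False by (intro powr_mono) auto
    also have "\<dots> = y ^ n" using False by (simp add: powr_realpow)
    also have "\<dots> \<le> fact n * exp y" using power_le_fact_mult_exp y by blast
    finally show ?thesis by (simp add: distrib_right add_increasing)
  qed
  show ?thesis by (rule that[OF _ bound]) (intro add_pos_pos; simp)
qed

lemma powr_mult_exp_le_div_square: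
  fixes \<alpha> \<theta> :: real
  assumes "\<alpha> > 0" "\<theta> \<ge> 0"
  obtains C where "C > 0"
    "\<And>\<mu>. \<mu> powr \<theta> * exp (- (\<mu> powr (2 * \<alpha>))) \<le> C * (\<mu> powr \<theta> / (1 + \<mu> powr \<theta>)\<^sup>2)"
proof -
  obtain D where "D > 0" and D: "\<And>y. 0 \<le> y \<Longrightarrow> y powr (\<theta> / \<alpha>) \<le> D * exp y"
    using powr_le_const_mult_exp[of "\<theta> / \<alpha>"] assms by auto
  have weight: "\<mu> powr \<theta> * exp (- (\<mu> powr (2 * \<alpha>))) \<le> (2 + 2 * D) * (\<mu> powr \<theta> / (1 + \<mu> powr \<theta>)\<^sup>2)"
    for \<mu> :: real
  proof -
    define x where "x = \<mu> powr \<theta>"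
    define y where "y = \<mu> powr (2 * \<alpha>)"
    have "x\<^sup>2 = y powr (\<theta> / \<alpha>)"
      using assms by (simp add: x_def y_def powr_powr power2_eq_square powr_add[symmetric])
    then have "x\<^sup>2 \<le> D * exp y" using D[of y] by (simp add: y_def)
    moreover have "1 \<le> exp y" by (simp add: y_def)
    moreover have "(1 + x)\<^sup>2 \<le> 2 + 2 * x\<^sup>2"
      using zero_le_power2[of "x - 1"] by (simp add: power2_eq_square algebra_simps)
    ultimately have "(1 + x)\<^sup>2 \<le> 2 * exp y + 2 * (D * exp y)" by linarith
    then have bound: "(1 + x)\<^sup>2 \<le> (2 + 2 * D) * exp y" by (simp add: algebra_simps)
    have "x * (1 + x)\<^sup>2 \<le> x * ((2 + 2 * D) * exp y)"
      using bound by (intro mult_left_mono) (auto simp: x_def)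
    moreover have "1 + x > 0" by (simp add: x_def add_pos_nonneg)
    ultimately have "x * exp (- y) \<le> (2 + 2 * D) * (x / (1 + x)\<^sup>2)"
      by (simp add: exp_minus field_simps)
    then show ?thesis by (simp add: x_def y_def)
  qed
  show ?thesis by (rule that[OF _ weight]) (use \<open>D > 0\<close> in simp)
qed

lemma div_one_plus_square_le_telescope:
  fixes q x :: real
  assumes "q > 1" "x \<ge> 0"
  shows "x / (1 + x)\<^sup>2 \<le> q / (q - 1) * (q * x / (1 + q * x) - x / (1 + x))"
proof -
  have pos: "1 + q * x > 0" "1 + x > 0" using assms by (auto simp: add_pos_nonneg)
  have "q * x / (1 + q * x) - x / (1 + x) = (q - 1) * x / ((1 + q * x) * (1 + x))"
    using pos by (simp add: field_simps)
  then have "q / (q - 1) * (q * x / (1 + q * x) - x / (1 + x)) = q * x / ((1 + q * x) * (1 + x))"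
    using assms by simp
  moreover have "(1 + q * x) * (1 + x) \<le> q * (1 + x) * (1 + x)"
    using assms pos by (intro mult_right_mono) (auto simp: algebra_simps)
  then have "q * x / (q * (1 + x) * (1 + x)) \<le> q * x / ((1 + q * x) * (1 + x))"
    using assms pos by (intro frac_le) auto
  moreover have "x / (1 + x)\<^sup>2 = q * x / (q * (1 + x) * (1 + x))"
    using assms by (simp add: power2_eq_square)
  ultimately show ?thesis by simp
qed

lemma powr_mult_exp_doubling:
  fixes \<alpha> \<theta> \<mu> \<nu> :: real
  assumes "\<alpha> > 0" "\<theta> \<ge> 0" "0 < \<mu>" "\<mu> \<le> \<nu>" "\<nu> \<le> 2 * \<mu>"
  shows "\<nu> powr \<theta> * exp (- (\<nu> powr (2 * \<alpha>))) \<le> 2 powr \<theta> * (\<mu> powr \<theta> * exp (- (\<mu> powr (2 * \<alpha>))))"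
proof -
  have "\<nu> powr \<theta> \<le> (2 * \<mu>) powr \<theta>" using assms by (intro powr_mono2) auto
  also have "\<dots> = 2 powr \<theta> * \<mu> powr \<theta>" using assms by (simp add: powr_mult)
  finally have "\<nu> powr \<theta> \<le> 2 powr \<theta> * \<mu> powr \<theta>" .
  moreover have "\<mu> powr (2 * \<alpha>) \<le> \<nu> powr (2 * \<alpha>)" using assms by (intro powr_mono2) auto
  then have "exp (- (\<nu> powr (2 * \<alpha>))) \<le> exp (- (\<mu> powr (2 * \<alpha>)))" by simp
  ultimately have "\<nu> powr \<theta> * exp (- (\<nu> powr (2 * \<alpha>)))
      \<le> (2 powr \<theta> * \<mu> powr \<theta>) * exp (- (\<mu> powr (2 * \<alpha>)))"
    by (intro mult_mono) auto
  then show ?thesis by (simp add: mult.assoc)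
qed

lemma dyadic_sum_powr_mult_exp_bounded:
  fixes \<alpha> \<theta> :: real
  assumes "\<alpha> > 0" "\<theta> > 0"
  obtains C where "\<And>m \<nu> r. 0 < m \<Longrightarrow> (\<And>i. i < r \<Longrightarrow> m * 2 ^ i \<le> \<nu> i \<and> \<nu> i \<le> 2 * (m * 2 ^ i)) \<Longrightarrow>
      (\<Sum>i<r. \<nu> i powr \<theta> * exp (- (\<nu> i powr (2 * \<alpha>)))) \<le> C"
proof -
  obtain C1 where "C1 > 0" and C1: "\<And>\<mu>.
      \<mu> powr \<theta> * exp (- (\<mu> powr (2 * \<alpha>))) \<le> C1 * (\<mu> powr \<theta> / (1 + \<mu> powr \<theta>)\<^sup>2)"
    using powr_mult_exp_le_div_square assms by (metis less_imp_le)
  define q where "q = (2::real) powr \<theta>"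
  have "q > 1" using assms by (simp add: q_def)
  define \<phi> where "\<phi> x = x / (1 + x)" for x :: real
  define C where "C = q * C1 * (q / (q - 1))"
  have "(\<Sum>i<r. \<nu> i powr \<theta> * exp (- (\<nu> i powr (2 * \<alpha>)))) \<le> C"
    if "0 < m" and \<nu>: "\<And>i. i < r \<Longrightarrow> m * 2 ^ i \<le> \<nu> i \<and> \<nu> i \<le> 2 * (m * 2 ^ i)" for m \<nu> r
  proof -
    define x where "x i = (m * 2 ^ i) powr \<theta>" for i :: nat
    have x_Suc: "x (Suc i) = q * x i" for i
      using \<open>0 < m\<close> by (simp add: x_def q_def powr_mult mult_ac)
    have x_nonneg: "x i \<ge> 0" for i by (simp add: x_def)
    have "\<nu> i powr \<theta> * exp (- (\<nu> i powr (2 * \<alpha>))) \<le> C * (\<phi> (x (Suc i)) - \<phi> (x i))"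
      if "i < r" for i
    proof -
      have "\<nu> i powr \<theta> * exp (- (\<nu> i powr (2 * \<alpha>)))
          \<le> q * ((m * 2 ^ i) powr \<theta> * exp (- ((m * 2 ^ i) powr (2 * \<alpha>))))"
        unfolding q_def using \<nu>[OF \<open>i < r\<close>] \<open>0 < m\<close> assms
        by (intro powr_mult_exp_doubling) auto
      also have "\<dots> \<le> q * (C1 * (x i / (1 + x i)\<^sup>2))"
        using mult_left_mono[OF C1[of "m * 2 ^ i"], of q] \<open>0 < m\<close> \<open>q > 1\<close>
        unfolding x_def by simp
      also have "\<dots> \<le> q * (C1 * (q / (q - 1) * (\<phi> (x (Suc i)) - \<phi> (x i))))"
        using div_one_plus_square_le_telescope[OF \<open>q > 1\<close> x_nonneg] \<open>q > 1\<close> \<open>C1 > 0\<close>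
        by (intro mult_left_mono) (auto simp: \<phi>_def x_Suc)
      finally show ?thesis by (simp add: C_def mult_ac)
    qed
    then have "(\<Sum>i<r. \<nu> i powr \<theta> * exp (- (\<nu> i powr (2 * \<alpha>))))
        \<le> (\<Sum>i<r. C * (\<phi> (x (Suc i)) - \<phi> (x i)))"
      by (intro sum_mono) auto
    also have "\<dots> = C * (\<phi> (x r) - \<phi> (x 0))"
      using sum_lessThan_telescope[of "\<lambda>i. \<phi> (x i)" r] by (simp add: sum_distrib_left[symmetric])
    also have "\<dots> \<le> C * 1"
    proof (intro mult_left_mono)
      have "\<phi> (x r) \<le> 1" "0 \<le> \<phi> (x 0)"
        using x_nonneg[of r] x_nonneg[of 0] by (simp_all add: \<phi>_def)
      then show "\<phi> (x r) - \<phi> (x 0) \<le> 1" by simp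
      show "0 \<le> C" using \<open>q > 1\<close> \<open>C1 > 0\<close> by (simp add: C_def)
    qed
    finally show ?thesis by simp
  qed
  then show ?thesis by (rule that)
qed

lemma trig_frac_heat_single_direction:
  "trig (frac_heat \<alpha> t (map (\<lambda>i. (c i *\<^sub>R w, k i)) [1..<r+1])) x =
   (\<Sum>i=1..r. (exp (- t * norm (k i) powr (2 * \<alpha>)) * c i * cos (k i \<bullet> x)) *\<^sub>R w)"
proof -
  have "set [1..<r+1] = {1..r}" by auto
  then show ?thesis
    unfolding trig_def frac_heat_def map_map interv_sum_list_conv_sum_set_nat
    by (intro sum.cong) (auto simp: mult_ac)
qed

lemma besov_neg_single_direction_le:
  assumes "norm w = 1" "\<And>i. 0 \<le> c i"
    and B: "\<And>t. t > 0 \<Longrightarrow>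
      t powr (s / (2 * \<alpha>)) * (\<Sum>i=1..r. exp (- t * norm (k i) powr (2 * \<alpha>)) * c i) \<le> B"
  shows "besov_neg \<alpha> s (map (\<lambda>i. (c i *\<^sub>R w, k i)) [1..<r+1]) \<le> ereal B"
  unfolding besov_neg_def
proof (rule SUP_least)
  fix t :: real
  assume "t \<in> {0<..}"
  define S where "S = (\<Sum>i=1..r. exp (- t * norm (k i) powr (2 * \<alpha>)) * c i)"
  have "norm (trig (frac_heat \<alpha> t (map (\<lambda>i. (c i *\<^sub>R w, k i)) [1..<r+1])) x) \<le> S" for x
  proof -
    have "norm (trig (frac_heat \<alpha> t (map (\<lambda>i. (c i *\<^sub>R w, k i)) [1..<r+1])) x)
        \<le> (\<Sum>i=1..r. norm ((exp (- t * norm (k i) powr (2 * \<alpha>)) * c i * cos (k i \<bullet> x)) *\<^sub>R w))"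
      unfolding trig_frac_heat_single_direction by (rule norm_sum)
    also have "\<dots> = (\<Sum>i=1..r. exp (- t * norm (k i) powr (2 * \<alpha>)) * c i * \<bar>cos (k i \<bullet> x)\<bar>)"
      using assms by (simp add: abs_mult)
    also have "\<dots> \<le> S"
      unfolding S_def using assms(2) by (intro sum_mono) (simp add: mult_left_le)
    finally show ?thesis .
  qed
  then have "Linf_norm (trig (frac_heat \<alpha> t (map (\<lambda>i. (c i *\<^sub>R w, k i)) [1..<r+1]))) \<le> ereal S"
    unfolding Linf_norm_def by (intro SUP_least) simp
  then have "ereal (t powr (s / (2 * \<alpha>))) * Linf_norm (trig (frac_heat \<alpha> t (map (\<lambda>i. (c i *\<^sub>R w, k i)) [1..<r+1])))
      \<le> ereal (t powr (s / (2 * \<alpha>))) * ereal S"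
    by (rule ereal_mult_left_mono) simp
  also have "\<dots> \<le> ereal B"
    using B \<open>t \<in> {0<..}\<close> by (simp add: S_def)
  finally show "ereal (t powr (s / (2 * \<alpha>))) *
      Linf_norm (trig (frac_heat \<alpha> t (map (\<lambda>i. (c i *\<^sub>R w, k i)) [1..<r+1]))) \<le> ereal B" .
qed

lemma heat_factor_rescale:
  fixes t \<alpha> \<theta> n :: real
  assumes "t > 0" "\<alpha> > 0" "n \<ge> 0"
  defines "\<tau> \<equiv> t powr (1 / (2 * \<alpha>))"
  shows "t powr (\<theta> / (2 * \<alpha>)) * (exp (- t * n powr (2 * \<alpha>)) * n powr \<theta>) =
    (\<tau> * n) powr \<theta> * exp (- ((\<tau> * n) powr (2 * \<alpha>)))"
proof -
  have "(\<tau> * n) powr \<theta> = t powr (\<theta> / (2 * \<alpha>)) * n powr \<theta>"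
    using assms by (simp add: powr_mult powr_powr)
  moreover have "(\<tau> * n) powr (2 * \<alpha>) = t * n powr (2 * \<alpha>)"
    using assms by (simp add: powr_mult powr_powr)
  ultimately show ?thesis by (simp add: mult_ac)
qed

lemma besov_neg_dyadic_modes_le:
  fixes \<alpha> \<theta> \<rho> m C :: real and k :: "nat \<Rightarrow> vec3" and w :: vec3
  assumes "\<alpha> > 0" "norm w = 1" "\<rho> \<ge> 0" "m > 0"
    and C: "\<And>m \<nu> r. 0 < m \<Longrightarrow> (\<And>i. i < r \<Longrightarrow> m * 2 ^ i \<le> \<nu> i \<and> \<nu> i \<le> 2 * (m * 2 ^ i)) \<Longrightarrow>
      (\<Sum>i<r. \<nu> i powr \<theta> * exp (- (\<nu> i powr (2 * \<alpha>)))) \<le> C"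
    and k: "\<And>i. m * 2 ^ i \<le> norm (k (Suc i)) \<and> norm (k (Suc i)) \<le> 2 * (m * 2 ^ i)"
  shows "besov_neg \<alpha> \<theta> (map (\<lambda>i. ((\<rho> * norm (k i) powr \<theta>) *\<^sub>R w, k i)) [1..<r+1])
    \<le> ereal (\<rho> * C)"
proof (rule besov_neg_single_direction_le[OF \<open>norm w = 1\<close>])
  fix t :: real
  assume "t > 0"
  define \<tau> where "\<tau> = t powr (1 / (2 * \<alpha>))"
  have "\<tau> > 0" using \<open>t > 0\<close> by (simp add: \<tau>_def)
  have "t powr (\<theta> / (2 * \<alpha>)) * (\<Sum>i=1..r. exp (- t * norm (k i) powr (2 * \<alpha>)) * (\<rho> * norm (k i) powr \<theta>))
      = \<rho> * (\<Sum>i=1..r. t powr (\<theta> / (2 * \<alpha>)) * (exp (- t * norm (k i) powr (2 * \<alpha>)) * norm (k i) powr \<theta>))"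
    unfolding sum_distrib_left by (intro sum.cong refl) (simp only: mult_ac)
  also have "\<dots> = \<rho> * (\<Sum>i=1..r. (\<tau> * norm (k i)) powr \<theta> * exp (- ((\<tau> * norm (k i)) powr (2 * \<alpha>))))"
    unfolding \<tau>_def
    by (intro arg_cong[where f="\<lambda>s. \<rho> * s"] sum.cong refl heat_factor_rescale \<open>t > 0\<close> \<open>\<alpha> > 0\<close> norm_ge_zero)
  also have "\<dots> = \<rho> * (\<Sum>i<r. (\<tau> * norm (k (Suc i))) powr \<theta> * exp (- ((\<tau> * norm (k (Suc i))) powr (2 * \<alpha>))))"
    by (simp add: sum.atLeast1_atMost_eq)
  also have "\<dots> \<le> \<rho> * C"
  proof (intro mult_left_mono C[of "\<tau> * m"])
    fix i
    show "\<tau> * m * 2 ^ i \<le> \<tau> * norm (k (Suc i)) \<and> \<tau> * norm (k (Suc i)) \<le> 2 * (\<tau> * m * 2 ^ i)"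
      using k[of i] \<open>\<tau> > 0\<close> by (simp add: mult.assoc mult.left_commute)
  qed (use \<open>\<tau> > 0\<close> \<open>m > 0\<close> \<open>\<rho> \<ge> 0\<close> in auto)
  finally show "t powr (\<theta> / (2 * \<alpha>)) * (\<Sum>i=1..r. exp (- t * norm (k i) powr (2 * \<alpha>)) * (\<rho> * norm (k i) powr \<theta>))
      \<le> \<rho> * C" .
qed (use \<open>\<rho> \<ge> 0\<close> in simp)

lemma inner_zeta_eta: "zeta \<bullet> zeta = 1" "zeta \<bullet> eta = 0" "eta \<bullet> eta = 1"
  by (simp_all add: zeta_def eta_def inner_vec_def sum_3)

lemma norm_vv: "norm vv = 1" "norm vv' = 1"
  by (simp_all add: vv_def vv'_def norm_eq_sqrt_inner inner_vec_def sum_3)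

lemma norm_kk_Suc: "norm (kk K (Suc i)) = real K * 2 ^ i"
  by (simp add: kk_def norm_eq_sqrt_inner inner_zeta_eta)

lemma norm_kk'_Suc: "norm (kk' K (Suc i)) = sqrt ((real K * 2 ^ i)\<^sup>2 + 1)"
  by (simp add: kk'_def kk_def norm_eq_sqrt_inner inner_add_left inner_add_right
      inner_zeta_eta inner_commute[of eta zeta] power2_eq_square mult_ac)

lemma norm_kk'_Suc_dyadic:
  assumes "K \<ge> 1"
  shows "real K * 2 ^ i \<le> norm (kk' K (Suc i)) \<and> norm (kk' K (Suc i)) \<le> 2 * (real K * 2 ^ i)"
proof -
  define a where "a = real K * 2 ^ i"
  have "1 * 1 \<le> a" unfolding a_def using assms by (intro mult_mono) auto
  then have "1 * 1 \<le> a * a" by (intro mult_mono) auto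
  then have "a\<^sup>2 + 1 \<le> (2 * a)\<^sup>2" by (simp add: power2_eq_square)
  then have "sqrt (a\<^sup>2 + 1) \<le> 2 * a" using \<open>1 * 1 \<le> a\<close> by (intro real_le_lsqrt) auto
  moreover have "a \<le> sqrt (a\<^sup>2 + 1)" by (rule real_le_rsqrt) simp
  ultimately show ?thesis by (simp add: norm_kk'_Suc a_def)
qed

theorem lemma4p2:
  fixes \<alpha> \<beta>1 \<beta>2 \<theta>1 \<theta>2 :: real
  assumes "\<alpha> > 0" "\<beta>1 > 0" "\<beta>2 > 0" "\<theta>1 > 0" "\<theta>2 > 0"
  shows "\<exists>C. \<forall>r K :: nat. r \<ge> 1 \<longrightarrow> K \<ge> 1 \<longrightarrow>
           besov_neg \<alpha> \<theta>1 (u0_modes r K \<beta>1 \<theta>1) \<le> ereal (C * real r powr (- \<beta>1)) \<and>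
           besov_neg \<alpha> \<theta>2 (b0_modes r K \<beta>2 \<theta>2) \<le> ereal (C * real r powr (- \<beta>2))"
proof -
  obtain C1 where C1: "\<And>m \<nu> r. 0 < m \<Longrightarrow> (\<And>i. i < r \<Longrightarrow> m * 2 ^ i \<le> \<nu> i \<and> \<nu> i \<le> 2 * (m * 2 ^ i)) \<Longrightarrow>
      (\<Sum>i<r. \<nu> i powr \<theta>1 * exp (- (\<nu> i powr (2 * \<alpha>)))) \<le> C1"
    using dyadic_sum_powr_mult_exp_bounded[OF \<open>\<alpha> > 0\<close> \<open>\<theta>1 > 0\<close>] by blast
  obtain C2 where C2: "\<And>m \<nu> r. 0 < m \<Longrightarrow> (\<And>i. i < r \<Longrightarrow> m * 2 ^ i \<le> \<nu> i \<and> \<nu> i \<le> 2 * (m * 2 ^ i)) \<Longrightarrow>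
      (\<Sum>i<r. \<nu> i powr \<theta>2 * exp (- (\<nu> i powr (2 * \<alpha>)))) \<le> C2"
    using dyadic_sum_powr_mult_exp_bounded[OF \<open>\<alpha> > 0\<close> \<open>\<theta>2 > 0\<close>] by blast
  have "besov_neg \<alpha> \<theta>1 (u0_modes r K \<beta>1 \<theta>1) \<le> ereal (max C1 C2 * real r powr (- \<beta>1))"
    and "besov_neg \<alpha> \<theta>2 (b0_modes r K \<beta>2 \<theta>2) \<le> ereal (max C1 C2 * real r powr (- \<beta>2))"
    if "K \<ge> 1" for r K :: nat
  proof -
    have "besov_neg \<alpha> \<theta>1 (u0_modes r K \<beta>1 \<theta>1) \<le> ereal (real r powr (- \<beta>1) * C1)"
      unfolding u0_modes_def using \<open>K \<ge> 1\<close>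
      by (intro besov_neg_dyadic_modes_le[OF \<open>\<alpha> > 0\<close> norm_vv(1) _ _ C1, where m = "real K"]) (auto simp: norm_kk_Suc)
    then show "besov_neg \<alpha> \<theta>1 (u0_modes r K \<beta>1 \<theta>1) \<le> ereal (max C1 C2 * real r powr (- \<beta>1))"
      by (rule order_trans) (simp add: mult.commute mult_right_mono)
    have "besov_neg \<alpha> \<theta>2 (b0_modes r K \<beta>2 \<theta>2) \<le> ereal (real r powr (- \<beta>2) * C2)"
      unfolding b0_modes_def using \<open>K \<ge> 1\<close>
      by (intro besov_neg_dyadic_modes_le[OF \<open>\<alpha> > 0\<close> norm_vv(2) _ _ C2, where m = "real K"] norm_kk'_Suc_dyadic) auto
    then show "besov_neg \<alpha> \<theta>2 (b0_modes r K \<beta>2 \<theta>2) \<le> ereal (max C1 C2 * real r powr (- \<beta>2))"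
      by (rule order_trans) (simp add: mult.commute mult_right_mono)
  qed
  then show ?thesis by blast
qed

end
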